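(* Let $\mathcal{C}$ be a finite set of latent classes with cardinality $N_{\mathcal{C}}$, let $\rho$ be the uniform distribution on $\mathcal{C}$, and for each $c\in\mathcal{C}$ let $\mathcal{D}_c$ be a distribution on a feature space $\mathcal{X}$. Let $N\ge1$ and let $k$ be an integer with $2\le k+1\le N_{\mathcal{C}}$. Then every encoder $f:\mathcal{X}\to\mathbb{R}^d$ satisfies $$L_{\mathrm{sup},k}(f)\le L^\mu_{\mathrm{sup},k}(f)\le\frac{k}{1-\tau_N^+}\big(L^N_{\mathrm{un}}(f)-\tau_N^+\log(N+1)\big),$$ where $\tau_N^+=\mathbb{P}[c_i=c\ \forall i\mid (c,c_1,\dots,c_N)\sim\rho^{\otimes(N+1)}]$.
   Context: Positive pairs are drawn from $\mathcal{D}_{\mathrm{sim}}(x,x^+)=\sum_{c}\rho(c)\mathcal{D}_c(x)\mathcal{D}_c(x^+)$ and negatives from $\mathcal{D}_{\mathrm{neg}}(x^-)=\sum_c\rho(c)\mathcal{D}_c(x^-)$. The unsupervised loss with $N$ negatives is $$L^N_{\mathrm{un}}(f)=\mathbb{E}_{(x,x^+)\sim\mathcal{D}_{\mathrm{sim}},\,X^-\sim\mathcal{D}_{\mathrm{neg}}^{\otimes N}}\Big[-\log\frac{\exp(f(x)^Tf(x^+))}{\exp(f(x)^Tf(x^+))+\sum_{x^-\in X^-}\exp(f(x)^Tf(x^-))}\Big].$$ A $(k+1)$-way task is a subset $\mathcal{T}\subseteq\mathcal{C}$ with $|\mathcal{T}|=k+1$; it induces $\mathcal{D}_{\mathcal{T}}(c)=\rho(c\mid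 c\in\mathcal{T})$ and $\mathcal{D}_{\mathcal{T}}(x,c)=\mathcal{D}_{\mathcal{T}}(c)\mathcal{D}_c(x)$. The supervised loss on $\mathcal{T}$ is $$L_{\mathrm{sup}}(f,\mathcal{T})=\inf_{W\in\mathbb{R}^{|\mathcal{T}|\times d}}\mathbb{E}_{(x,c)\sim\mathcal{D}_{\mathcal{T}}}\Big[-\log\frac{\exp((Wf(x))_c)}{\sum_{c'\in\mathcal{T}}\exp((Wf(x))_{c'})}\Big],$$ and $L^\mu_{\mathrm{sup}}(f,\mathcal{T})$ is the same expectation evaluated at the mean classifier $W^\mu$ with rows $W^\mu_{c,:}=\mathbb{E}_{x\sim\mathcal{D}_c}[f(x)]$, $c\in\mathcal{T}$. Finally $L_{\mathrm{sup},k}(f)=\mathbb{E}_{\mathcal{T}\sim\mathcal{D}^{k+1}}[L_{\mathrm{sup}}(f,\mathcal{T})]$ and $L^\mu_{\mathrm{sup},k}(f)=\mathbb{E}_{\mathcal{T}\sim\mathcal{D}^{k+1}}[L^\mu_{\mathrm{sup}}(f,\mathcal{T})]$, where $\mathcal{D}^{k+1}$ is the uniform distribution over subsets of $k+1$ distinct classes of $\mathcal{C}$. *)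

theory Defs
  imports "HOL-Probability.Probability"
begin

text \<open>Encoders take values in real^'d (d = CARD('d)).\<close>

text \<open>Since rho is uniform on C,
  D_sim = (1/|C|) sum_c D_c (x) D_c (x+), and D_neg^{(x)N} is the uniform average over class
  tuples cs in C^N of the product measures prod_i D_(cs i).\<close>
definition Lun :: "'c set \<Rightarrow> ('c \<Rightarrow> 'x measure) \<Rightarrow> nat \<Rightarrow> ('x \<Rightarrow> real^'d) \<Rightarrow> real" where
  "Lun C D N f =
     (1 / real (card C)) * (\<Sum>c\<in>C. \<integral>x. \<integral>xp.
        (1 / real (card C) ^ N) * (\<Sum>cs\<in>PiE {..<N} (\<lambda>_. C).
           \<integral>xs. - ln (exp (f x \<bullet> f xp) /
                     (exp (f x \<bullet> f xp) + (\<Sum>i<N. exp (f x \<bullet> f (xs i)))))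
           \<partial>(PiM {..<N} (\<lambda>i. D (cs i))))
      \<partial>(D c) \<partial>(D c))"

text \<open>Supervised cross-entropy loss on task T for a linear classifier whose row for class c
  is W c (only rows c in T matter); D_T(c) = rho(c | c in T) is uniform on T.\<close>
definition Lsup_W :: "'c set \<Rightarrow> ('c \<Rightarrow> 'x measure) \<Rightarrow> ('x \<Rightarrow> real^'d) \<Rightarrow> ('c \<Rightarrow> real^'d) \<Rightarrow> real" where
  "Lsup_W T D f W =
     (1 / real (card T)) * (\<Sum>c\<in>T. \<integral>x. - ln (exp (W c \<bullet> f x) / (\<Sum>c'\<in>T. exp (W c' \<bullet> f x))) \<partial>(D c))"

definition Lsup :: "'c set \<Rightarrow> ('c \<Rightarrow> 'x measure) \<Rightarrow> ('x \<Rightarrow> real^'d) \<Rightarrow> real" where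
  "Lsup T D f = (INF W. Lsup_W T D f W)"

definition Lsup_mu :: "'c set \<Rightarrow> ('c \<Rightarrow> 'x measure) \<Rightarrow> ('x \<Rightarrow> real^'d) \<Rightarrow> real" where
  "Lsup_mu T D f = Lsup_W T D f (\<lambda>c. \<integral>x. f x \<partial>(D c))"

definition tasks :: "'c set \<Rightarrow> nat \<Rightarrow> 'c set set" where
  "tasks C k = {T. T \<subseteq> C \<and> card T = k + 1}"

definition Lsup_k :: "'c set \<Rightarrow> ('c \<Rightarrow> 'x measure) \<Rightarrow> nat \<Rightarrow> ('x \<Rightarrow> real^'d) \<Rightarrow> real" where
  "Lsup_k C D k f = (1 / real (card (tasks C k))) * (\<Sum>T\<in>tasks C k. Lsup T D f)"

definition Lsup_mu_k :: "'c set \<Rightarrow> ('c \<Rightarrow> 'x measure) \<Rightarrow> nat \<Rightarrow> ('x \<Rightarrow> real^'d) \<Rightarrow> real" where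
  "Lsup_mu_k C D k f = (1 / real (card (tasks C k))) * (\<Sum>T\<in>tasks C k. Lsup_mu T D f)"

definition tau_plus :: "'c set \<Rightarrow> nat \<Rightarrow> real" where
  "tau_plus C N = measure_pmf.prob
     (pair_pmf (pmf_of_set C) (Pi_pmf {..<N} undefined (\<lambda>_. pmf_of_set C)))
     {(c, cs). \<forall>i<N. cs i = c}"

end

theory Submission
  imports Defs
begin

(* Write n = card C. The contrastive loss of an anchor x with positive x+ and negatives x-_i is
   lse0 N (\<lambda>i. f x \<bullet> f x-_i - f x \<bullet> f x+), a convex function of the score gaps. Jensen's
   inequality over the positive and over the negatives (independent given their classes) replaces
   them by their class means, so for an anchor of class c the loss is at least the average over
   class tuples cs of lse0 N (\<lambda>i. f x \<bullet> mu (cs i) - f x \<bullet> mu c). The tuple whose entries all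
   equal c (probability tau) contributes ln (N + 1). Every other tuple dominates the binary loss
   ln (1 + exp (f x \<bullet> mu c' - f x \<bullet> mu c)) of each class c' it contains besides c, hence the
   average of these weighted by the share of c' among the entries different from c; by symmetry
   under swapping classes other than c, each c' receives the same total weight (n^N - 1) / (n - 1).
   This gives Lun >= tau ln (N + 1) + (1 - tau) / (n (n - 1)) S, where S is the sum of the binary
   mean-classifier losses over ordered pairs of distinct classes.
   On the supervised side, -ln of the mean-classifier softmax on a task T is at most the sum of the
   binary losses against the other classes of T, because ln (1 + sum y) <= sum ln (1 + y). Every
   ordered pair lies in the same number of tasks, so averaging gives Lsup_mu_k <= k S / (n (n - 1)).
   Finally, the mean classifier is one admissible W, so Lsup_k <= Lsup_mu_k. *)

definition lse0 :: "nat \<Rightarrow> (nat \<Rightarrow> real) \<Rightarrow> real" where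
  "lse0 N v = ln (1 + (\<Sum>i<N. exp (v i)))"

lemma one_plus_sum_exp_pos: "0 < 1 + (\<Sum>i\<in>A. exp (v i :: real))"
  by (smt (verit) exp_gt_zero sum_nonneg)

lemma lse0_cong: "(\<And>i. i < N \<Longrightarrow> v i = w i) \<Longrightarrow> lse0 N v = lse0 N w"
  unfolding lse0_def by (metis lessThan_iff sum.cong)

lemma lse0_nonneg: "0 \<le> lse0 N v"
  unfolding lse0_def by (simp add: sum_nonneg)

lemma lse0_zero: "lse0 N (\<lambda>_. 0) = ln (real N + 1)"
  unfolding lse0_def by (simp add: add.commute)

lemma lse0_ge_component:
  assumes "i < N"
  shows "ln (1 + exp (v i)) \<le> lse0 N v"
proof -
  have "exp (v i) \<le> (\<Sum>i<N. exp (v i))"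
    using assms by (intro member_le_sum) auto
  then show ?thesis
    unfolding lse0_def using one_plus_sum_exp_pos[of v "{..<N}"]
    by (subst ln_le_cancel_iff) (auto intro: add_pos_pos)
qed

lemma lse0_le_abs_sum: "lse0 N v \<le> ln (real N + 1) + (\<Sum>i<N. \<bar>v i\<bar>)"
proof -
  let ?S = "\<Sum>i<N. \<bar>v i\<bar>"
  have "exp (v i) \<le> exp ?S" if "i < N" for i
  proof -
    have "\<bar>v i\<bar> \<le> ?S"
      using that by (intro member_le_sum) auto
    then show ?thesis
      by simp
  qed
  then have "(\<Sum>i<N. exp (v i)) \<le> real N * exp ?S"
    using sum_mono[of "{..<N}" "\<lambda>i. exp (v i)" "\<lambda>_. exp ?S"] by simp
  moreover have "1 \<le> exp ?S"
    by (simp add: sum_nonneg)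
  ultimately have "1 + (\<Sum>i<N. exp (v i)) \<le> (real N + 1) * exp ?S"
    unfolding distrib_right by linarith
  then have "lse0 N v \<le> ln ((real N + 1) * exp ?S)"
    unfolding lse0_def using one_plus_sum_exp_pos by (subst ln_le_cancel_iff) auto
  then show ?thesis
    by (simp add: ln_mult)
qed

lemma lse0_ge_tangent:
  "lse0 N w + (\<Sum>i<N. exp (w i) / (1 + (\<Sum>j<N. exp (w j))) * (v i - w i)) \<le> lse0 N v"
proof -
  define Z where "Z = 1 + (\<Sum>j<N. exp (w j))"
  have Z: "0 < Z"
    unfolding Z_def by (rule one_plus_sum_exp_pos)
  \<comment> \<open>Jensen for exp at the point (v - w, 0), weighted by the softmax of (w, 0)\<close>
  define a where "a i = (if i < N then exp (w i) / Z else 1 / Z)" for i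
  define y where "y i = (if i < N then v i - w i else 0)" for i
  have "(\<Sum>i<Suc N. a i) = 1"
    using Z by (simp add: a_def Z_def sum_divide_distrib[symmetric] add_divide_distrib[symmetric])
  then have "exp (\<Sum>i<Suc N. a i *\<^sub>R y i) \<le> (\<Sum>i<Suc N. a i * exp (y i))"
    by (intro convex_on_sum[OF _ _ exp_convex]) (use Z in \<open>auto simp: a_def\<close>)
  also have "\<dots> = (1 + (\<Sum>i<N. exp (v i))) / Z"
    by (simp add: a_def y_def exp_diff sum_divide_distrib[symmetric] add_divide_distrib add.commute)
  finally have "(\<Sum>i<Suc N. a i *\<^sub>R y i) \<le> ln ((1 + (\<Sum>i<N. exp (v i))) / Z)"
    using Z one_plus_sum_exp_pos[of v "{..<N}"] by (subst ln_ge_iff) auto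
  also have "\<dots> = lse0 N v - lse0 N w"
    using Z one_plus_sum_exp_pos[of v "{..<N}"] unfolding lse0_def Z_def by (subst ln_div) auto
  also have "(\<Sum>i<Suc N. a i *\<^sub>R y i) = (\<Sum>i<N. exp (w i) / Z * (v i - w i))"
    by (simp add: a_def y_def)
  finally show ?thesis
    unfolding Z_def by simp
qed

lemma neg_ln_softmax_eq_lse0:
  "- ln (exp a / (exp a + (\<Sum>i<N. exp (b i)))) = lse0 N (\<lambda>i. b i - a)"
proof -
  have "exp a + (\<Sum>i<N. exp (b i)) = exp a * (1 + (\<Sum>i<N. exp (b i - a)))"
    by (simp add: distrib_left sum_distrib_left exp_diff)
  then show ?thesis
    unfolding lse0_def using one_plus_sum_exp_pos by (simp add: ln_div)
qed

lemma ln_one_plus_sum_le_sum_ln: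
  fixes y :: "'a \<Rightarrow> real"
  assumes "finite A" "\<And>a. a \<in> A \<Longrightarrow> 0 \<le> y a"
  shows "ln (1 + (\<Sum>a\<in>A. y a)) \<le> (\<Sum>a\<in>A. ln (1 + y a))"
  using assms
proof (induction A rule: finite_induct)
  case empty
  then show ?case by simp
next
  case (insert a A)
  have ya: "0 \<le> y a" and sA: "0 \<le> (\<Sum>a\<in>A. y a)"
    using insert by (auto intro: sum_nonneg)
  have "1 + (\<Sum>a\<in>insert a A. y a) \<le> (1 + y a) * (1 + (\<Sum>a\<in>A. y a))"
    using insert ya sA by (simp add: algebra_simps)
  then have "ln (1 + (\<Sum>a\<in>insert a A. y a)) \<le> ln ((1 + y a) * (1 + (\<Sum>a\<in>A. y a)))"
    using insert.prems by (subst ln_le_cancel_iff) (auto intro!: mult_pos_pos add_pos_nonneg sum_nonneg)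
  also have "\<dots> = ln (1 + y a) + ln (1 + (\<Sum>a\<in>A. y a))"
    using ya sA by (simp add: ln_mult)
  also have "\<dots> \<le> (\<Sum>a\<in>insert a A. ln (1 + y a))"
    using insert by simp
  finally show ?case .
qed

lemma neg_ln_softmax_eq:
  fixes a :: "'c \<Rightarrow> real"
  assumes "finite T" "c \<in> T"
  shows "- ln (exp (a c) / (\<Sum>c'\<in>T. exp (a c'))) = ln (1 + (\<Sum>c'\<in>T-{c}. exp (a c' - a c)))"
proof -
  have "(\<Sum>c'\<in>T. exp (a c')) = exp (a c) * (1 + (\<Sum>c'\<in>T-{c}. exp (a c' - a c)))"
    using assms by (simp add: sum.remove distrib_left sum_distrib_left exp_diff)
  then show ?thesis
    using one_plus_sum_exp_pos by (simp add: ln_div)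
qed

lemma neg_ln_softmax_nonneg:
  fixes a :: "'c \<Rightarrow> real"
  assumes "finite T" "c \<in> T"
  shows "0 \<le> - ln (exp (a c) / (\<Sum>c'\<in>T. exp (a c')))"
  unfolding neg_ln_softmax_eq[OF assms] by (simp add: sum_nonneg)

lemma neg_ln_softmax_le_sum_binary:
  fixes a :: "'c \<Rightarrow> real"
  assumes "finite T" "c \<in> T"
  shows "- ln (exp (a c) / (\<Sum>c'\<in>T. exp (a c'))) \<le> (\<Sum>c'\<in>T-{c}. ln (1 + exp (a c' - a c)))"
  unfolding neg_ln_softmax_eq[OF assms] using assms by (intro ln_one_plus_sum_le_sum_ln) auto

lemma borel_measurable_lse0:
  assumes "\<And>i. i < N \<Longrightarrow> Y i \<in> borel_measurable M"
  shows "(\<lambda>\<omega>. lse0 N (\<lambda>i. Y i \<omega>)) \<in> borel_measurable M"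
  unfolding lse0_def using assms by measurable

lemma (in prob_space) integrable_lse0:
  assumes "\<And>i. i < N \<Longrightarrow> integrable M (Y i)"
  shows "integrable M (\<lambda>\<omega>. lse0 N (\<lambda>i. Y i \<omega>))"
proof (rule Bochner_Integration.integrable_bound)
  show "integrable M (\<lambda>\<omega>. ln (real N + 1) + (\<Sum>i<N. \<bar>Y i \<omega>\<bar>))"
    using assms by (intro Bochner_Integration.integrable_add Bochner_Integration.integrable_sum integrable_abs) auto
  show "(\<lambda>\<omega>. lse0 N (\<lambda>i. Y i \<omega>)) \<in> borel_measurable M"
    using assms by (intro borel_measurable_lse0) auto
  show "AE \<omega> in M. norm (lse0 N (\<lambda>i. Y i \<omega>)) \<le> norm (ln (real N + 1) + (\<Sum>i<N. \<bar>Y i \<omega>\<bar>))"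
  proof (intro AE_I2)
    fix \<omega>
    have "0 \<le> lse0 N (\<lambda>i. Y i \<omega>)" "lse0 N (\<lambda>i. Y i \<omega>) \<le> ln (real N + 1) + (\<Sum>i<N. \<bar>Y i \<omega>\<bar>)"
      by (rule lse0_nonneg, rule lse0_le_abs_sum)
    then show "norm (lse0 N (\<lambda>i. Y i \<omega>)) \<le> norm (ln (real N + 1) + (\<Sum>i<N. \<bar>Y i \<omega>\<bar>))"
      by simp
  qed
qed

lemma (in prob_space) integral_lse0_le:
  assumes "\<And>i. i < N \<Longrightarrow> integrable M (Y i)"
  shows "(\<integral>\<omega>. lse0 N (\<lambda>i. Y i \<omega>) \<partial>M) \<le> ln (real N + 1) + (\<Sum>i<N. \<integral>\<omega>. \<bar>Y i \<omega>\<bar> \<partial>M)"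
proof -
  have "(\<integral>\<omega>. lse0 N (\<lambda>i. Y i \<omega>) \<partial>M) \<le> (\<integral>\<omega>. ln (real N + 1) + (\<Sum>i<N. \<bar>Y i \<omega>\<bar>) \<partial>M)"
    using assms
    by (intro integral_mono integrable_lse0 lse0_le_abs_sum Bochner_Integration.integrable_add
        Bochner_Integration.integrable_sum integrable_abs) auto
  also have "\<dots> = ln (real N + 1) + (\<Sum>i<N. \<integral>\<omega>. \<bar>Y i \<omega>\<bar> \<partial>M)"
    using assms
    by (subst Bochner_Integration.integral_add)
      (auto intro!: Bochner_Integration.integrable_sum Bochner_Integration.integral_sum simp: prob_space)
  finally show ?thesis .
qed

lemma (in prob_space) jensen_lse0:
  assumes "\<And>i. i < N \<Longrightarrow> integrable M (Y i)"
  shows "lse0 N (\<lambda>i. \<integral>\<omega>. Y i \<omega> \<partial>M) \<le> (\<integral>\<omega>. lse0 N (\<lambda>i. Y i \<omega>) \<partial>M)"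
proof -
  define w where "w i = (\<integral>\<omega>. Y i \<omega> \<partial>M)" for i
  define p where "p i = exp (w i) / (1 + (\<Sum>j<N. exp (w j)))" for i
  have centred: "(\<integral>\<omega>. p i * (Y i \<omega> - w i) \<partial>M) = 0" if "i < N" for i
    using assms[OF that] by (simp add: w_def prob_space)
  have "(\<integral>\<omega>. (\<Sum>i<N. p i * (Y i \<omega> - w i)) \<partial>M) = (\<Sum>i<N. \<integral>\<omega>. p i * (Y i \<omega> - w i) \<partial>M)"
    using assms by (intro Bochner_Integration.integral_sum) auto
  also have "\<dots> = 0"
    by (intro sum.neutral ballI) (metis centred lessThan_iff)
  finally have "lse0 N w = (\<integral>\<omega>. lse0 N w + (\<Sum>i<N. p i * (Y i \<omega> - w i)) \<partial>M)"
    using assms by (subst Bochner_Integration.integral_add) (auto simp: prob_space)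
  also have "\<dots> \<le> (\<integral>\<omega>. lse0 N (\<lambda>i. Y i \<omega>) \<partial>M)"
  proof (intro integral_mono integrable_lse0)
    show "integrable M (\<lambda>\<omega>. lse0 N w + (\<Sum>i<N. p i * (Y i \<omega> - w i)))"
      using assms by (intro Bochner_Integration.integrable_add Bochner_Integration.integrable_sum
          Bochner_Integration.integrable_mult_right Bochner_Integration.integrable_diff) auto
    show "lse0 N w + (\<Sum>i<N. p i * (Y i \<omega> - w i)) \<le> lse0 N (\<lambda>i. Y i \<omega>)" for \<omega>
      unfolding p_def by (rule lse0_ge_tangent)
  qed (use assms in auto)
  finally show ?thesis
    unfolding w_def .
qed

lemma
  fixes g :: "'a \<Rightarrow> real"
  assumes "\<And>i. i \<in> I \<Longrightarrow> prob_space (M i)" "i \<in> I" "g \<in> borel_measurable (M i)"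
  shows integrable_PiM_component_iff: "integrable (PiM I M) (\<lambda>\<omega>. g (\<omega> i)) \<longleftrightarrow> integrable (M i) g"
    and integral_PiM_component: "(\<integral>\<omega>. g (\<omega> i) \<partial>PiM I M) = integral\<^sup>L (M i) g"
proof -
  have component: "(\<lambda>\<omega>. \<omega> i) \<in> measurable (PiM I M) (M i)"
    using assms(2) by (rule measurable_component_singleton)
  have distr: "distr (PiM I M) (M i) (\<lambda>\<omega>. \<omega> i) = M i"
    using assms(1,2) by (rule distr_PiM_component)
  show "integrable (PiM I M) (\<lambda>\<omega>. g (\<omega> i)) \<longleftrightarrow> integrable (M i) g"
    using integrable_distr_eq[OF component assms(3)] distr by simp
  show "(\<integral>\<omega>. g (\<omega> i) \<partial>PiM I M) = integral\<^sup>L (M i) g"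
    using integral_distr[OF component assms(3)] distr by simp
qed

lemma sum_PiE_involution:
  assumes "\<And>y. y \<in> C \<Longrightarrow> \<pi> y \<in> C" "\<And>y. y \<in> C \<Longrightarrow> \<pi> (\<pi> y) = y"
  shows "(\<Sum>cs\<in>PiE I (\<lambda>_. C). h (\<lambda>i\<in>I. \<pi> (cs i))) = (\<Sum>cs\<in>PiE I (\<lambda>_. C). h cs)"
proof (rule sum.reindex_bij_betw)
  show "bij_betw (\<lambda>cs. \<lambda>i\<in>I. \<pi> (cs i)) (PiE I (\<lambda>_. C)) (PiE I (\<lambda>_. C))"
    by (rule bij_betw_byWitness[where f' = "\<lambda>cs. \<lambda>i\<in>I. \<pi> (cs i)"])
      (use assms in \<open>auto simp: PiE_iff extensional_def fun_eq_iff\<close>)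
qed

(* This is 0 when every entry of cs equals c, since x / 0 = 0. *)
definition share :: "nat \<Rightarrow> 'c \<Rightarrow> (nat \<Rightarrow> 'c) \<Rightarrow> 'c \<Rightarrow> real" where
  "share N c cs c' = (\<Sum>i<N. if cs i = c' then 1 else 0) / (\<Sum>i<N. if cs i \<noteq> c then 1 else 0)"

lemma sum_count_times:
  assumes "finite C" "cs \<in> PiE {..<N} (\<lambda>_. C)"
  shows "(\<Sum>c'\<in>C-{c}. (\<Sum>i<N. if cs i = c' then 1 else 0) * g c')
       = (\<Sum>i<N. if cs i \<noteq> c then g (cs i) else (0 :: real))"
proof -
  have "(\<Sum>c'\<in>C-{c}. (\<Sum>i<N. if cs i = c' then 1 else 0) * g c')
      = (\<Sum>c'\<in>C-{c}. \<Sum>i<N. if cs i = c' then g c' else 0)"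
    unfolding sum_distrib_right by (intro sum.cong) auto
  also have "\<dots> = (\<Sum>i<N. \<Sum>c'\<in>C-{c}. if cs i = c' then g c' else 0)"
    by (rule sum.swap)
  also have "\<dots> = (\<Sum>i<N. if cs i \<noteq> c then g (cs i) else 0)"
    using assms by (intro sum.cong) (auto simp: sum.delta')
  finally show ?thesis .
qed

lemma sum_share:
  assumes "finite C" "cs \<in> PiE {..<N} (\<lambda>_. C)"
  shows "(\<Sum>c'\<in>C-{c}. share N c cs c') = (if \<forall>i<N. cs i = c then 0 else 1)"
proof -
  let ?m = "\<Sum>i<N. if cs i \<noteq> c then 1 else (0 :: real)"
  have "(\<Sum>c'\<in>C-{c}. share N c cs c') = ?m / ?m"
    unfolding share_def sum_divide_distrib[symmetric]
    using sum_count_times[OF assms, where c = c and g = "\<lambda>_. 1"] by simp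
  moreover have "?m = 0 \<longleftrightarrow> (\<forall>i<N. cs i = c)"
    by (subst sum_nonneg_eq_0_iff) auto
  ultimately show ?thesis
    by simp
qed

lemma share_weighted_le_lse0:
  assumes "finite C" "cs \<in> PiE {..<N} (\<lambda>_. C)"
  shows "(\<Sum>c'\<in>C-{c}. share N c cs c' * ln (1 + exp (t c'))) \<le> lse0 N (\<lambda>i. t (cs i))"
proof -
  let ?m = "\<Sum>i<N. if cs i \<noteq> c then 1 else (0 :: real)"
  have "(\<Sum>c'\<in>C-{c}. share N c cs c' * ln (1 + exp (t c')))
      = (\<Sum>c'\<in>C-{c}. (\<Sum>i<N. if cs i = c' then 1 else 0) * ln (1 + exp (t c'))) / ?m"
    by (simp only: share_def times_divide_eq_left sum_divide_distrib[symmetric])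
  also have "\<dots> = (\<Sum>i<N. if cs i \<noteq> c then ln (1 + exp (t (cs i))) else 0) / ?m"
    by (simp only: sum_count_times[OF assms])
  also have "\<dots> \<le> (\<Sum>i<N. if cs i \<noteq> c then lse0 N (\<lambda>i. t (cs i)) else 0) / ?m"
    using lse0_ge_component[of _ N "\<lambda>i. t (cs i)"]
    by (intro divide_right_mono sum_mono) (auto simp: sum_nonneg)
  also have "\<dots> = lse0 N (\<lambda>i. t (cs i)) * ?m / ?m"
    by (simp add: sum_distrib_left if_distrib[of "(*) (lse0 N _)"] mult.commute cong: if_cong)
  also have "\<dots> \<le> lse0 N (\<lambda>i. t (cs i))"
    by (cases "?m = 0") (simp_all add: lse0_nonneg)
  finally show ?thesis .
qed

lemma sum_share_swap:
  assumes "c1 \<in> C" "c2 \<in> C" "c1 \<noteq> c" "c2 \<noteq> c"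
  shows "(\<Sum>cs\<in>PiE {..<N} (\<lambda>_. C). share N c cs c1) = (\<Sum>cs\<in>PiE {..<N} (\<lambda>_. C). share N c cs c2)"
proof -
  define \<pi> where "\<pi> y = (if y = c1 then c2 else if y = c2 then c1 else y)" for y
  have "share N c (\<lambda>i\<in>{..<N}. \<pi> (cs i)) c2 = share N c cs c1" for cs
    unfolding share_def using assms by (intro arg_cong2[where f = "(/)"] sum.cong) (auto simp: \<pi>_def)
  then have "(\<Sum>cs\<in>PiE {..<N} (\<lambda>_. C). share N c cs c1)
      = (\<Sum>cs\<in>PiE {..<N} (\<lambda>_. C). share N c (\<lambda>i\<in>{..<N}. \<pi> (cs i)) c2)"
    by simp
  also have "\<dots> = (\<Sum>cs\<in>PiE {..<N} (\<lambda>_. C). share N c cs c2)"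
    using assms by (intro sum_PiE_involution) (auto simp: \<pi>_def)
  finally show ?thesis .
qed

(* All classes other than c receive the same total share by symmetry, and the shares of a
   tuple that is not constantly c add up to 1. *)
lemma sum_tuples_share:
  assumes "finite C" "c \<in> C" "c1 \<in> C" "c1 \<noteq> c"
  shows "(\<Sum>cs\<in>PiE {..<N} (\<lambda>_. C). share N c cs c1) = (real (card C) ^ N - 1) / (real (card C) - 1)"
proof -
  let ?CS = "PiE {..<N} (\<lambda>_. C)"
  define cs0 where "cs0 = (\<lambda>i\<in>{..<N}. c)"
  have cs0: "cs0 \<in> ?CS"
    using assms unfolding cs0_def by auto
  have fin: "finite ?CS"
    using assms(1) by (simp add: finite_PiE)
  have const_iff: "(\<forall>i<N. cs i = c) \<longleftrightarrow> cs = cs0" if "cs \<in> ?CS" for cs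
    using that unfolding cs0_def by (auto simp: fun_eq_iff PiE_iff extensional_def)
  have "(\<Sum>c'\<in>C-{c}. \<Sum>cs\<in>?CS. share N c cs c') = (\<Sum>cs\<in>?CS. \<Sum>c'\<in>C-{c}. share N c cs c')"
    by (rule sum.swap)
  also have "\<dots> = (\<Sum>cs\<in>?CS. 1 - (if cs = cs0 then 1 else 0))"
    using assms(1) const_iff by (intro sum.cong) (simp_all add: sum_share)
  also have "\<dots> = real (card C) ^ N - 1"
    using assms(1) fin cs0 by (simp add: sum_subtractf card_PiE)
  finally have total: "(\<Sum>c'\<in>C-{c}. \<Sum>cs\<in>?CS. share N c cs c') = real (card C) ^ N - 1" .
  have "(\<Sum>c'\<in>C-{c}. \<Sum>cs\<in>?CS. share N c cs c') = (\<Sum>c'\<in>C-{c}. \<Sum>cs\<in>?CS. share N c cs c1)"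
    by (rule sum.cong[OF refl], rule sum_share_swap) (use assms in auto)
  then have "(\<Sum>c'\<in>C-{c}. \<Sum>cs\<in>?CS. share N c cs c') = real (card (C - {c})) * (\<Sum>cs\<in>?CS. share N c cs c1)"
    by simp
  moreover have "card {c, c1} \<le> card C"
    using assms by (intro card_mono) auto
  ultimately show ?thesis
    using total assms by (simp add: of_nat_diff field_simps)
qed

lemma sum_tuples_lse0_ge:
  fixes t :: "'c \<Rightarrow> real"
  assumes "finite C" "c \<in> C" "t c = 0"
  shows "ln (real N + 1) + (real (card C) ^ N - 1) / (real (card C) - 1) * (\<Sum>c'\<in>C-{c}. ln (1 + exp (t c')))
         \<le> (\<Sum>cs\<in>PiE {..<N} (\<lambda>_. C). lse0 N (\<lambda>i. t (cs i)))"
proof -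
  let ?CS = "PiE {..<N} (\<lambda>_. C)"
  define cs0 where "cs0 = (\<lambda>i\<in>{..<N}. c)"
  have "(if cs = cs0 then ln (real N + 1) else 0) + (\<Sum>c'\<in>C-{c}. share N c cs c' * ln (1 + exp (t c')))
      \<le> lse0 N (\<lambda>i. t (cs i))" if "cs \<in> ?CS" for cs
  proof (cases "cs = cs0")
    case True
    then have "lse0 N (\<lambda>i. t (cs i)) = ln (real N + 1)"
      using assms(3) lse0_zero by (simp add: cs0_def lse0_cong[of N _ "\<lambda>_. 0"])
    moreover have "share N c cs c' = 0" if "c' \<noteq> c" for c'
      using True that by (simp add: share_def cs0_def)
    ultimately show ?thesis
      using True by simp
  next
    case False
    then show ?thesis
      using share_weighted_le_lse0[OF assms(1) that] by simp
  qed
  then have "(\<Sum>cs\<in>?CS. (if cs = cs0 then ln (real N + 1) else 0)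
      + (\<Sum>c'\<in>C-{c}. share N c cs c' * ln (1 + exp (t c')))) \<le> (\<Sum>cs\<in>?CS. lse0 N (\<lambda>i. t (cs i)))"
    by (rule sum_mono)
  moreover have "(\<Sum>cs\<in>?CS. if cs = cs0 then ln (real N + 1) else 0) = ln (real N + 1)"
    using assms(1,2) finite_PiE[of "{..<N}" "\<lambda>_. C"] by (simp add: cs0_def)
  moreover have "(\<Sum>cs\<in>?CS. \<Sum>c'\<in>C-{c}. share N c cs c' * ln (1 + exp (t c')))
      = (\<Sum>c'\<in>C-{c}. (\<Sum>cs\<in>?CS. share N c cs c') * ln (1 + exp (t c')))"
    unfolding sum_distrib_right by (rule sum.swap)
  moreover have "\<dots> = (real (card C) ^ N - 1) / (real (card C) - 1) * (\<Sum>c'\<in>C-{c}. ln (1 + exp (t c')))"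
    using assms by (simp add: sum_tuples_share sum_distrib_left)
  ultimately show ?thesis
    by (simp add: sum.distrib)
qed

lemma finite_tasks: "finite C \<Longrightarrow> finite (tasks C k)"
  unfolding tasks_def by (rule finite_subset[of _ "Pow C"]) auto

lemma card_tasks: "finite C \<Longrightarrow> card (tasks C k) = card C choose (k + 1)"
  unfolding tasks_def by (rule n_subsets)

lemma card_tasks_containing_pair:
  assumes "finite C" "c \<in> C" "c' \<in> C" "c \<noteq> c'" "1 \<le> k"
  shows "card {T \<in> tasks C k. c \<in> T \<and> c' \<in> T} = (card C - 2) choose (k - 1)"
proof -
  let ?R = "{U. U \<subseteq> C - {c, c'} \<and> card U = k - 1}"
  have "{T \<in> tasks C k. c \<in> T \<and> c' \<in> T} = (\<lambda>U. U \<union> {c, c'}) ` ?R"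
  proof (intro equalityI subsetI)
    fix T
    assume T: "T \<in> {T \<in> tasks C k. c \<in> T \<and> c' \<in> T}"
    then have "finite T"
      using assms(1) unfolding tasks_def by (auto intro: finite_subset)
    then have "T - {c, c'} \<in> ?R"
      using T assms(4) unfolding tasks_def by (auto simp: card_Diff_subset)
    moreover have "T = (T - {c, c'}) \<union> {c, c'}"
      using T by auto
    ultimately show "T \<in> (\<lambda>U. U \<union> {c, c'}) ` ?R"
      by blast
  next
    fix T
    assume "T \<in> (\<lambda>U. U \<union> {c, c'}) ` ?R"
    then obtain U where U: "U \<subseteq> C - {c, c'}" "card U = k - 1" and T: "T = U \<union> {c, c'}"
      by blast
    have "finite U"
      using U assms(1) by (auto intro: finite_subset)
    then have "card T = card U + card {c, c'}"
      unfolding T using U by (intro card_Un_disjoint) auto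
    then show "T \<in> {T \<in> tasks C k. c \<in> T \<and> c' \<in> T}"
      using U T assms unfolding tasks_def by auto
  qed
  moreover have "inj_on (\<lambda>U. U \<union> {c, c'}) ?R"
    by (rule inj_onI) auto
  ultimately have "card {T \<in> tasks C k. c \<in> T \<and> c' \<in> T} = card ?R"
    by (simp add: card_image)
  also have "\<dots> = card (C - {c, c'}) choose (k - 1)"
    using assms(1) by (intro n_subsets) auto
  also have "card (C - {c, c'}) = card C - 2"
    using assms by (simp add: card_Diff_subset)
  finally show ?thesis .
qed

lemma sum_tasks_ordered_pairs:
  fixes g :: "'c \<Rightarrow> 'c \<Rightarrow> real"
  assumes "finite C" "1 \<le> k"
  shows "(\<Sum>T\<in>tasks C k. \<Sum>c\<in>T. \<Sum>c'\<in>T-{c}. g c c')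
       = real ((card C - 2) choose (k - 1)) * (\<Sum>c\<in>C. \<Sum>c'\<in>C-{c}. g c c')"
proof -
  have restrict: "{c \<in> C. c \<in> T} = T" "{c' \<in> C-{c}. c' \<in> T} = T - {c}" if "T \<in> tasks C k" for T c
    using that unfolding tasks_def by auto
  have "(\<Sum>T\<in>tasks C k. \<Sum>c\<in>T. \<Sum>c'\<in>T-{c}. g c c')
      = (\<Sum>T\<in>tasks C k. \<Sum>c\<in>{c \<in> C. c \<in> T}. \<Sum>c'\<in>{c' \<in> C-{c}. c' \<in> T}. g c c')"
    by (rule sum.cong[OF refl]) (simp only: restrict)
  also have "\<dots> = (\<Sum>c\<in>C. \<Sum>T\<in>{T \<in> tasks C k. c \<in> T}. \<Sum>c'\<in>{c' \<in> C-{c}. c' \<in> T}. g c c')"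
    by (rule sum.swap_restrict) (use assms(1) finite_tasks in auto)
  also have "\<dots> = (\<Sum>c\<in>C. \<Sum>c'\<in>C-{c}. \<Sum>T\<in>{T \<in> {T \<in> tasks C k. c \<in> T}. c' \<in> T}. g c c')"
    by (rule sum.cong[OF refl], rule sum.swap_restrict) (simp_all add: assms(1) finite_tasks)
  also have "\<dots> = (\<Sum>c\<in>C. \<Sum>c'\<in>C-{c}. real ((card C - 2) choose (k - 1)) * g c c')"
  proof (rule sum.cong[OF refl], rule sum.cong[OF refl])
    fix c c'
    assume "c \<in> C" "c' \<in> C - {c}"
    moreover have "{T \<in> {T \<in> tasks C k. c \<in> T}. c' \<in> T} = {T \<in> tasks C k. c \<in> T \<and> c' \<in> T}"
      by auto
    ultimately show "(\<Sum>T\<in>{T \<in> {T \<in> tasks C k. c \<in> T}. c' \<in> T}. g c c') = real ((card C - 2) choose (k - 1)) * g c c'"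
      using card_tasks_containing_pair[OF assms(1), of c c' k] assms(2) by auto
  qed
  finally show ?thesis
    by (simp add: sum_distrib_left)
qed

lemma binomial_absorption_twice:
  assumes "1 \<le> k"
  shows "(n choose (k + 1)) * (k + 1) * k = n * (n - 1) * ((n - 2) choose (k - 1))"
proof -
  have "(n choose (k + 1)) * (k + 1) = n * ((n - 1) choose k)"
    using binomial_absorption[of k n] by (simp add: mult.commute)
  moreover have "((n - 1) choose k) * k = (n - 1) * ((n - 2) choose (k - 1))"
    using times_binomial_minus1_eq[of k "n - 1"] assms by (simp add: mult.commute numeral_2_eq_2)
  ultimately show ?thesis
    by (metis mult.assoc)
qed

lemma tau_plus_eq:
  assumes "finite C" "C \<noteq> {}"
  shows "tau_plus C N = 1 / real (card C) ^ N"
proof -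
  define p where "p = pair_pmf (pmf_of_set C) (Pi_pmf {..<N} undefined (\<lambda>_. pmf_of_set C))"
  define g where "g c = (\<lambda>i. if i < N then c else undefined)" for c :: 'a
  have "set_pmf p = C \<times> PiE_dflt {..<N} undefined (\<lambda>_. C)"
    unfolding p_def using assms by (simp add: set_Pi_pmf o_def)
  then have diagonal: "{(c, cs). \<forall>i<N. cs i = c} \<inter> set_pmf p = (\<lambda>c. (c, g c)) ` C"
    unfolding g_def PiE_dflt_def by (auto simp: fun_eq_iff)
  have "pmf p (c, g c) = (1 / real (card C)) ^ Suc N" if "c \<in> C" for c
    unfolding p_def using that assms by (simp add: pmf_pair pmf_Pi g_def pmf_of_set power_Suc)
  moreover have "inj_on (\<lambda>c. (c, g c)) C"
    by (auto simp: inj_on_def)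
  moreover have "tau_plus C N = measure (measure_pmf p) ({(c, cs). \<forall>i<N. cs i = c} \<inter> set_pmf p)"
    unfolding tau_plus_def p_def by (rule measure_Int_set_pmf[symmetric])
  ultimately have "tau_plus C N = real (card C) * (1 / real (card C)) ^ Suc N"
    unfolding diagonal using assms by (simp add: measure_measure_pmf_finite sum.reindex)
  then show ?thesis
    using assms by (simp add: field_simps)
qed

lemma Lsup_le_Lsup_mu:
  assumes "finite T"
  shows "Lsup T D f \<le> Lsup_mu T D f"
proof -
  have "0 \<le> Lsup_W T D f W" for W
    unfolding Lsup_W_def using assms
    by (intro mult_nonneg_nonneg sum_nonneg Bochner_Integration.integral_nonneg neg_ln_softmax_nonneg) auto
  then have "bdd_below (range (Lsup_W T D f))"
    by (intro bdd_belowI[of _ 0]) auto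
  then show ?thesis
    unfolding Lsup_def Lsup_mu_def by (rule cINF_lower) simp
qed

lemma Lsup_k_le_Lsup_mu_k:
  assumes "finite C"
  shows "Lsup_k C D k f \<le> Lsup_mu_k C D k f"
  unfolding Lsup_k_def Lsup_mu_k_def using assms
  by (intro mult_left_mono sum_mono Lsup_le_Lsup_mu) (auto simp: tasks_def intro: finite_subset)

locale class_model =
  fixes C :: "'c set" and D :: "'c \<Rightarrow> 'x measure" and X :: "'x measure" and f :: "'x \<Rightarrow> real^'d"
  assumes finite_C: "finite C"
    and two_le_card_C: "2 \<le> card C"
    and prob_space_D: "\<And>c. c \<in> C \<Longrightarrow> prob_space (D c)"
    and sets_D: "\<And>c. c \<in> C \<Longrightarrow> sets (D c) = sets X"
    and measurable_f: "f \<in> borel_measurable X"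
    and integrable_f: "\<And>c. c \<in> C \<Longrightarrow> integrable (D c) f"
begin

definition class_mean :: "'c \<Rightarrow> real^'d" where
  "class_mean c = (\<integral>x. f x \<partial>D c)"

definition binary_mean_loss :: "'c \<Rightarrow> 'c \<Rightarrow> real" where
  "binary_mean_loss c c' = (\<integral>x. ln (1 + exp (f x \<bullet> class_mean c' - f x \<bullet> class_mean c)) \<partial>D c)"

definition total_binary_loss :: real where
  "total_binary_loss = (\<Sum>c\<in>C. \<Sum>c'\<in>C-{c}. binary_mean_loss c c')"

definition norm_mass :: real where
  "norm_mass = (\<Sum>c\<in>C. \<integral>x. norm (f x) \<partial>D c)"

lemma integrable_const_D: "c \<in> C \<Longrightarrow> integrable (D c) (\<lambda>_. a :: real)"
  using prob_space_D prob_space.finite_measure finite_measure.integrable_const by blast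

lemma integral_const_D: "c \<in> C \<Longrightarrow> (\<integral>_. a \<partial>D c) = (a :: real)"
  using prob_space_D by (simp add: prob_space.prob_space)

lemma integrable_binary_loss_integrand:
  assumes "c \<in> C"
  shows "integrable (D c) (\<lambda>x. ln (1 + exp (f x \<bullet> a - f x \<bullet> b)))"
  using prob_space.integrable_lse0[OF prob_space_D[OF assms], of 1 "\<lambda>_ x. f x \<bullet> a - f x \<bullet> b"]
    integrable_f[OF assms] by (simp add: lse0_def)

lemma Lsup_mu_le_binary_losses:
  assumes "T \<subseteq> C"
  shows "Lsup_mu T D f \<le> 1 / real (card T) * (\<Sum>c\<in>T. \<Sum>c'\<in>T-{c}. binary_mean_loss c c')"
proof -
  have "finite T"
    using assms finite_C by (rule finite_subset)
  have "(\<integral>x. - ln (exp (class_mean c \<bullet> f x) / (\<Sum>c'\<in>T. exp (class_mean c' \<bullet> f x))) \<partial>D c)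
      \<le> (\<Sum>c'\<in>T-{c}. binary_mean_loss c c')" if "c \<in> T" for c
  proof -
    have "c \<in> C"
      using that assms by auto
    have "(\<integral>x. - ln (exp (class_mean c \<bullet> f x) / (\<Sum>c'\<in>T. exp (class_mean c' \<bullet> f x))) \<partial>D c)
        \<le> (\<integral>x. (\<Sum>c'\<in>T-{c}. ln (1 + exp (f x \<bullet> class_mean c' - f x \<bullet> class_mean c))) \<partial>D c)"
    proof (rule integral_mono')
      show "integrable (D c) (\<lambda>x. \<Sum>c'\<in>T-{c}. ln (1 + exp (f x \<bullet> class_mean c' - f x \<bullet> class_mean c)))"
        using integrable_binary_loss_integrand[OF \<open>c \<in> C\<close>] by (intro Bochner_Integration.integrable_sum) auto
      show "0 \<le> (\<Sum>c'\<in>T-{c}. ln (1 + exp (f x \<bullet> class_mean c' - f x \<bullet> class_mean c)))" for x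
        by (intro sum_nonneg) (simp add: add_pos_pos)
      show "- ln (exp (class_mean c \<bullet> f x) / (\<Sum>c'\<in>T. exp (class_mean c' \<bullet> f x)))
          \<le> (\<Sum>c'\<in>T-{c}. ln (1 + exp (f x \<bullet> class_mean c' - f x \<bullet> class_mean c)))" for x
        using neg_ln_softmax_le_sum_binary[OF \<open>finite T\<close> that, of "\<lambda>c'. class_mean c' \<bullet> f x"]
        by (simp add: inner_commute)
    qed
    also have "\<dots> = (\<Sum>c'\<in>T-{c}. binary_mean_loss c c')"
      unfolding binary_mean_loss_def using integrable_binary_loss_integrand[OF \<open>c \<in> C\<close>]
      by (simp add: Bochner_Integration.integral_sum)
    finally show ?thesis .
  qed
  then show ?thesis
    unfolding Lsup_mu_def Lsup_W_def class_mean_def[symmetric]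
    by (intro mult_left_mono sum_mono) auto
qed

lemma Lsup_mu_k_le:
  assumes "1 \<le> k" "k + 1 \<le> card C"
  shows "Lsup_mu_k C D k f \<le> real k / (real (card C) * (real (card C) - 1)) * total_binary_loss"
proof -
  define n where "n = real (card C)"
  define tk where "tk = real (card (tasks C k))"
  define ct where "ct = real ((card C - 2) choose (k - 1))"
  have "Lsup_mu T D f \<le> 1 / (real k + 1) * (\<Sum>c\<in>T. \<Sum>c'\<in>T-{c}. binary_mean_loss c c')"
    if "T \<in> tasks C k" for T
    using that Lsup_mu_le_binary_losses[of T] unfolding tasks_def by (simp add: add.commute)
  then have "Lsup_mu_k C D k f
      \<le> 1 / tk * (\<Sum>T\<in>tasks C k. 1 / (real k + 1) * (\<Sum>c\<in>T. \<Sum>c'\<in>T-{c}. binary_mean_loss c c'))"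
    unfolding Lsup_mu_k_def tk_def by (intro mult_left_mono sum_mono) auto
  also have "\<dots> = ct / (tk * (real k + 1)) * total_binary_loss"
    unfolding ct_def total_binary_loss_def
    by (simp only: sum_distrib_left[symmetric] sum_tasks_ordered_pairs[OF finite_C assms(1)]) simp
  also have "ct / (tk * (real k + 1)) = real k / (n * (n - 1))"
  proof -
    have "real ((card C choose (k + 1)) * (k + 1) * k) = real (card C * (card C - 1) * ((card C - 2) choose (k - 1)))"
      using binomial_absorption_twice[OF assms(1)] by presburger
    then have "tk * (real k + 1) * real k = n * (n - 1) * ct"
      unfolding tk_def ct_def n_def card_tasks[OF finite_C] using two_le_card_C
      by (simp add: of_nat_diff algebra_simps)
    moreover have "0 < tk"
      unfolding tk_def card_tasks[OF finite_C] using assms(2) by simp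
    ultimately show ?thesis
      using two_le_card_C unfolding n_def by (simp add: frac_eq_eq mult.commute)
  qed
  finally show ?thesis
    unfolding n_def .
qed

end

locale contrastive_model = class_model C D X f
  for C :: "'c set" and D :: "'c \<Rightarrow> 'x measure" and X :: "'x measure" and f :: "'x \<Rightarrow> real^'d" +
  fixes N :: nat
begin

definition class_tuples :: "(nat \<Rightarrow> 'c) set" where
  "class_tuples = PiE {..<N} (\<lambda>_. C)"

definition negatives :: "(nat \<Rightarrow> 'c) \<Rightarrow> (nat \<Rightarrow> 'x) measure" where
  "negatives cs = PiM {..<N} (\<lambda>i. D (cs i))"

definition tuple_loss :: "(nat \<Rightarrow> 'c) \<Rightarrow> 'x \<Rightarrow> 'x \<Rightarrow> real" where
  "tuple_loss cs x xp = (\<integral>xs. lse0 N (\<lambda>i. f x \<bullet> f (xs i) - f x \<bullet> f xp) \<partial>negatives cs)"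

definition pair_loss :: "'x \<Rightarrow> 'x \<Rightarrow> real" where
  "pair_loss x xp = 1 / real (card C) ^ N * (\<Sum>cs\<in>class_tuples. tuple_loss cs x xp)"

definition loss_bound :: "'x \<Rightarrow> 'x \<Rightarrow> real" where
  "loss_bound x xp = ln (real N + 1) + real N * (norm (f x) * (norm_mass + norm (f xp)))"

lemma Lun_eq: "Lun C D N f = 1 / real (card C) * (\<Sum>c\<in>C. \<integral>x. \<integral>xp. pair_loss x xp \<partial>D c \<partial>D c)"
  unfolding Lun_def pair_loss_def tuple_loss_def negatives_def class_tuples_def neg_ln_softmax_eq_lse0
  by simp

lemma finite_class_tuples: "finite class_tuples"
  unfolding class_tuples_def using finite_C by (simp add: finite_PiE)

lemma prob_space_negatives: "cs \<in> class_tuples \<Longrightarrow> prob_space (negatives cs)"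
  unfolding negatives_def class_tuples_def using prob_space_D by (intro prob_space_PiM) auto

lemma sets_negatives: "cs \<in> class_tuples \<Longrightarrow> sets (negatives cs) = sets (PiM {..<N} (\<lambda>_. X))"
  unfolding negatives_def class_tuples_def using sets_D by (intro sets_PiM_cong) auto

lemma
  fixes g :: "'x \<Rightarrow> real"
  assumes "cs \<in> class_tuples" "i < N" "g \<in> borel_measurable X"
  shows integrable_negatives_component_iff:
      "integrable (negatives cs) (\<lambda>xs. g (xs i)) \<longleftrightarrow> integrable (D (cs i)) g"
    and integral_negatives_component:
      "(\<integral>xs. g (xs i) \<partial>negatives cs) = integral\<^sup>L (D (cs i)) g"
proof -
  have "cs i \<in> C"
    using assms(1,2) unfolding class_tuples_def by auto
  then have g: "g \<in> borel_measurable (D (cs i))"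
    using assms(3) sets_D measurable_cong_sets by blast
  have prob: "\<And>j. j \<in> {..<N} \<Longrightarrow> prob_space (D (cs j))"
    using assms(1) prob_space_D unfolding class_tuples_def by auto
  show "integrable (negatives cs) (\<lambda>xs. g (xs i)) \<longleftrightarrow> integrable (D (cs i)) g"
    unfolding negatives_def by (rule integrable_PiM_component_iff[where I = "{..<N}" and M = "\<lambda>j. D (cs j)"])
      (use prob assms(2) g in auto)
  show "(\<integral>xs. g (xs i) \<partial>negatives cs) = integral\<^sup>L (D (cs i)) g"
    unfolding negatives_def by (rule integral_PiM_component[where I = "{..<N}" and M = "\<lambda>j. D (cs j)"])
      (use prob assms(2) g in auto)
qed

lemma tuple_loss_nonneg: "0 \<le> tuple_loss cs x xp"
  unfolding tuple_loss_def by (intro Bochner_Integration.integral_nonneg lse0_nonneg)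

lemma integral_norm_f_le_norm_mass: "c \<in> C \<Longrightarrow> (\<integral>x. norm (f x) \<partial>D c) \<le> norm_mass"
  unfolding norm_mass_def using finite_C by (intro member_le_sum) auto

lemma
  assumes "cs \<in> class_tuples" "i < N"
  shows integrable_score_gap: "integrable (negatives cs) (\<lambda>xs. f x \<bullet> f (xs i) - f x \<bullet> f xp)"
    and integral_score_gap:
      "(\<integral>xs. f x \<bullet> f (xs i) - f x \<bullet> f xp \<partial>negatives cs) = f x \<bullet> class_mean (cs i) - f x \<bullet> f xp"
    and integral_abs_score_gap_le:
      "(\<integral>xs. \<bar>f x \<bullet> f (xs i) - f x \<bullet> f xp\<bar> \<partial>negatives cs) \<le> norm (f x) * (norm_mass + norm (f xp))"
proof -
  have c: "cs i \<in> C"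
    using assms unfolding class_tuples_def by auto
  have gap: "(\<lambda>y. f x \<bullet> f y - f x \<bullet> f xp) \<in> borel_measurable X"
    and abs_gap: "(\<lambda>y. \<bar>f x \<bullet> f y - f x \<bullet> f xp\<bar>) \<in> borel_measurable X"
    using measurable_f by measurable
  show "integrable (negatives cs) (\<lambda>xs. f x \<bullet> f (xs i) - f x \<bullet> f xp)"
    and "(\<integral>xs. f x \<bullet> f (xs i) - f x \<bullet> f xp \<partial>negatives cs) = f x \<bullet> class_mean (cs i) - f x \<bullet> f xp"
    using c integrable_f integrable_const_D integral_const_D
    by (simp_all add: integrable_negatives_component_iff[OF assms gap]
        integral_negatives_component[OF assms gap] class_mean_def)
  have "(\<integral>y. \<bar>f x \<bullet> f y - f x \<bullet> f xp\<bar> \<partial>D (cs i))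
      \<le> (\<integral>y. norm (f x) * norm (f y) + norm (f x) * norm (f xp) \<partial>D (cs i))"
  proof (rule integral_mono)
    show "integrable (D (cs i)) (\<lambda>y. \<bar>f x \<bullet> f y - f x \<bullet> f xp\<bar>)"
      using c integrable_f integrable_const_D by simp
    show "integrable (D (cs i)) (\<lambda>y. norm (f x) * norm (f y) + norm (f x) * norm (f xp))"
      using c integrable_f integrable_const_D by simp
    show "\<bar>f x \<bullet> f y - f x \<bullet> f xp\<bar> \<le> norm (f x) * norm (f y) + norm (f x) * norm (f xp)" for y
      using Cauchy_Schwarz_ineq2[of "f x" "f y"] Cauchy_Schwarz_ineq2[of "f x" "f xp"] by linarith
  qed
  also have "\<dots> = norm (f x) * (\<integral>y. norm (f y) \<partial>D (cs i)) + norm (f x) * norm (f xp)"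
    using c integrable_f integrable_const_D prob_space.prob_space[OF prob_space_D[OF c]] by simp
  also have "\<dots> \<le> norm (f x) * (norm_mass + norm (f xp))"
    using integral_norm_f_le_norm_mass[OF c] by (simp add: distrib_left mult_left_mono)
  finally show "(\<integral>xs. \<bar>f x \<bullet> f (xs i) - f x \<bullet> f xp\<bar> \<partial>negatives cs) \<le> norm (f x) * (norm_mass + norm (f xp))"
    by (simp add: integral_negatives_component[OF assms abs_gap])
qed

lemma tuple_loss_ge:
  assumes "cs \<in> class_tuples"
  shows "lse0 N (\<lambda>i. f x \<bullet> class_mean (cs i) - f x \<bullet> f xp) \<le> tuple_loss cs x xp"
proof -
  interpret negatives: prob_space "negatives cs"
    using assms by (rule prob_space_negatives)
  show ?thesis
    unfolding tuple_loss_def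
    using negatives.jensen_lse0[of N "\<lambda>i xs. f x \<bullet> f (xs i) - f x \<bullet> f xp"]
      integrable_score_gap[OF assms] integral_score_gap[OF assms]
    by (simp cong: lse0_cong)
qed

lemma tuple_loss_le:
  assumes "cs \<in> class_tuples"
  shows "tuple_loss cs x xp \<le> loss_bound x xp"
proof -
  interpret negatives: prob_space "negatives cs"
    using assms by (rule prob_space_negatives)
  have "tuple_loss cs x xp
      \<le> ln (real N + 1) + (\<Sum>i<N. \<integral>xs. \<bar>f x \<bullet> f (xs i) - f x \<bullet> f xp\<bar> \<partial>negatives cs)"
    unfolding tuple_loss_def using integrable_score_gap[OF assms] by (rule negatives.integral_lse0_le)
  also have "\<dots> \<le> ln (real N + 1) + (\<Sum>i<N. norm (f x) * (norm_mass + norm (f xp)))"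
    using integral_abs_score_gap_le[OF assms] by (intro add_left_mono sum_mono) auto
  finally show ?thesis
    unfolding loss_bound_def by simp
qed

lemma pair_loss_nonneg: "0 \<le> pair_loss x xp"
  unfolding pair_loss_def by (intro mult_nonneg_nonneg sum_nonneg tuple_loss_nonneg) auto

lemma pair_loss_le: "pair_loss x xp \<le> loss_bound x xp"
proof -
  have "(\<Sum>cs\<in>class_tuples. tuple_loss cs x xp) \<le> real (card class_tuples) * loss_bound x xp"
    using sum_mono[of class_tuples "\<lambda>cs. tuple_loss cs x xp" "\<lambda>_. loss_bound x xp"] tuple_loss_le
    by simp
  moreover have "card class_tuples = card C ^ N"
    unfolding class_tuples_def using finite_C by (simp add: card_PiE)
  ultimately show ?thesis
    unfolding pair_loss_def using two_le_card_C by (simp add: field_simps)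
qed

lemma integrable_loss_bound: "c \<in> C \<Longrightarrow> integrable (D c) (loss_bound x)"
  unfolding loss_bound_def using integrable_f integrable_const_D by simp

lemma borel_measurable_tuple_loss:
  assumes "cs \<in> class_tuples" "c \<in> C"
  shows "(\<lambda>z. tuple_loss cs (fst z) (snd z)) \<in> borel_measurable (D c \<Otimes>\<^sub>M D c)"
proof -
  interpret negatives: prob_space "negatives cs"
    using assms(1) by (rule prob_space_negatives)
  have "sets ((D c \<Otimes>\<^sub>M D c) \<Otimes>\<^sub>M negatives cs) = sets ((X \<Otimes>\<^sub>M X) \<Otimes>\<^sub>M PiM {..<N} (\<lambda>_. X))"
    using sets_D[OF assms(2)] sets_negatives[OF assms(1)] by (intro sets_pair_measure_cong) auto
  moreover have "(\<lambda>(z, xs). lse0 N (\<lambda>i. f (fst z) \<bullet> f (xs i) - f (fst z) \<bullet> f (snd z)))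
      \<in> borel_measurable ((X \<Otimes>\<^sub>M X) \<Otimes>\<^sub>M PiM {..<N} (\<lambda>_. X))"
    unfolding lse0_def using measurable_f by measurable
  ultimately have "(\<lambda>(z, xs). lse0 N (\<lambda>i. f (fst z) \<bullet> f (xs i) - f (fst z) \<bullet> f (snd z)))
      \<in> borel_measurable ((D c \<Otimes>\<^sub>M D c) \<Otimes>\<^sub>M negatives cs)"
    by (simp cong: measurable_cong_sets)
  then show ?thesis
    unfolding tuple_loss_def by (rule negatives.borel_measurable_lebesgue_integral)
qed

lemma integrable_tuple_loss:
  assumes "cs \<in> class_tuples" "c \<in> C" "x \<in> space (D c)"
  shows "integrable (D c) (tuple_loss cs x)"
proof (rule Bochner_Integration.integrable_bound[OF integrable_loss_bound[OF assms(2)]])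
  show "tuple_loss cs x \<in> borel_measurable (D c)"
    using measurable_Pair2[OF borel_measurable_tuple_loss[OF assms(1,2)] assms(3)] by simp
  show "AE xp in D c. norm (tuple_loss cs x xp) \<le> norm (loss_bound x xp)"
    using tuple_loss_nonneg tuple_loss_le[OF assms(1)]
    by (intro AE_I2) (metis abs_of_nonneg order_trans real_norm_def)
qed

lemma integrable_pair_loss: "c \<in> C \<Longrightarrow> x \<in> space (D c) \<Longrightarrow> integrable (D c) (pair_loss x)"
  unfolding pair_loss_def using integrable_tuple_loss finite_class_tuples by simp

lemma integrable_integral_pair_loss:
  assumes "c \<in> C"
  shows "integrable (D c) (\<lambda>x. \<integral>xp. pair_loss x xp \<partial>D c)"
proof -
  interpret Dc: prob_space "D c"
    using assms by (rule prob_space_D)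
  have measurable: "(\<lambda>x. \<integral>xp. pair_loss x xp \<partial>D c) \<in> borel_measurable (D c)"
    unfolding pair_loss_def using borel_measurable_tuple_loss assms
    by (intro Dc.borel_measurable_lebesgue_integral) (simp add: case_prod_beta')
  have bound: "integrable (D c) (\<lambda>x. \<integral>xp. loss_bound x xp \<partial>D c)"
    unfolding loss_bound_def using assms integrable_f integrable_const_D by (simp add: Dc.prob_space)
  have "norm (\<integral>xp. pair_loss x xp \<partial>D c) \<le> norm (\<integral>xp. loss_bound x xp \<partial>D c)"
    if "x \<in> space (D c)" for x
  proof -
    have "0 \<le> (\<integral>xp. pair_loss x xp \<partial>D c)"
      by (intro Bochner_Integration.integral_nonneg pair_loss_nonneg)
    moreover have "(\<integral>xp. pair_loss x xp \<partial>D c) \<le> (\<integral>xp. loss_bound x xp \<partial>D c)"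
      using assms that by (intro integral_mono integrable_pair_loss integrable_loss_bound pair_loss_le)
    ultimately show ?thesis
      by simp
  qed
  then show ?thesis
    by (intro Bochner_Integration.integrable_bound[OF bound measurable] AE_I2)
qed

lemma integral_pair_loss_ge:
  assumes "c \<in> C" "x \<in> space (D c)"
  shows "1 / real (card C) ^ N * (ln (real N + 1) + (real (card C) ^ N - 1) / (real (card C) - 1)
           * (\<Sum>c'\<in>C-{c}. ln (1 + exp (f x \<bullet> class_mean c' - f x \<bullet> class_mean c))))
         \<le> (\<integral>xp. pair_loss x xp \<partial>D c)"
proof -
  interpret Dc: prob_space "D c"
    using assms(1) by (rule prob_space_D)
  have "lse0 N (\<lambda>i. f x \<bullet> class_mean (cs i) - f x \<bullet> class_mean c) \<le> (\<integral>xp. tuple_loss cs x xp \<partial>D c)"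
    if "cs \<in> class_tuples" for cs
  proof -
    have integrable: "integrable (D c) (\<lambda>xp. f x \<bullet> class_mean (cs i) - f x \<bullet> f xp)" for i
      using assms(1) integrable_f integrable_const_D by simp
    have "lse0 N (\<lambda>i. f x \<bullet> class_mean (cs i) - f x \<bullet> class_mean c)
        = lse0 N (\<lambda>i. \<integral>xp. f x \<bullet> class_mean (cs i) - f x \<bullet> f xp \<partial>D c)"
      using assms(1) integrable_f by (simp add: class_mean_def Dc.prob_space)
    also have "\<dots> \<le> (\<integral>xp. lse0 N (\<lambda>i. f x \<bullet> class_mean (cs i) - f x \<bullet> f xp) \<partial>D c)"
      using integrable by (rule Dc.jensen_lse0)
    also have "\<dots> \<le> (\<integral>xp. tuple_loss cs x xp \<partial>D c)"
      using integrable_tuple_loss[OF that assms] that integrable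
      by (intro integral_mono Dc.integrable_lse0 tuple_loss_ge) auto
    finally show ?thesis .
  qed
  then have "(\<Sum>cs\<in>class_tuples. lse0 N (\<lambda>i. f x \<bullet> class_mean (cs i) - f x \<bullet> class_mean c))
      \<le> (\<Sum>cs\<in>class_tuples. \<integral>xp. tuple_loss cs x xp \<partial>D c)"
    by (rule sum_mono)
  moreover have "ln (real N + 1) + (real (card C) ^ N - 1) / (real (card C) - 1)
        * (\<Sum>c'\<in>C-{c}. ln (1 + exp (f x \<bullet> class_mean c' - f x \<bullet> class_mean c)))
      \<le> (\<Sum>cs\<in>class_tuples. lse0 N (\<lambda>i. f x \<bullet> class_mean (cs i) - f x \<bullet> class_mean c))"
    unfolding class_tuples_def using finite_C assms(1)
    by (rule sum_tuples_lse0_ge[where t = "\<lambda>c'. f x \<bullet> class_mean c' - f x \<bullet> class_mean c"]) simp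
  ultimately show ?thesis
    unfolding pair_loss_def using integrable_tuple_loss[OF _ assms]
    by (simp add: Bochner_Integration.integral_sum divide_right_mono)
qed

lemma integral_integral_pair_loss_ge:
  assumes "c \<in> C"
  shows "1 / real (card C) ^ N * (ln (real N + 1) + (real (card C) ^ N - 1) / (real (card C) - 1)
           * (\<Sum>c'\<in>C-{c}. binary_mean_loss c c'))
         \<le> (\<integral>x. \<integral>xp. pair_loss x xp \<partial>D c \<partial>D c)"
proof -
  interpret Dc: prob_space "D c"
    using assms by (rule prob_space_D)
  define A where "A = (real (card C) ^ N - 1) / (real (card C) - 1)"
  define lower where "lower x = 1 / real (card C) ^ N * (ln (real N + 1)
    + A * (\<Sum>c'\<in>C-{c}. ln (1 + exp (f x \<bullet> class_mean c' - f x \<bullet> class_mean c))))" for x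
  have "(\<integral>x. lower x \<partial>D c) \<le> (\<integral>x. \<integral>xp. pair_loss x xp \<partial>D c \<partial>D c)"
  proof (rule integral_mono)
    show "integrable (D c) lower"
      unfolding lower_def using integrable_binary_loss_integrand[OF assms] by simp
    show "integrable (D c) (\<lambda>x. \<integral>xp. pair_loss x xp \<partial>D c)"
      using assms by (rule integrable_integral_pair_loss)
    show "lower x \<le> (\<integral>xp. pair_loss x xp \<partial>D c)" if "x \<in> space (D c)" for x
      unfolding lower_def A_def using assms that by (rule integral_pair_loss_ge)
  qed
  moreover have "(\<integral>x. lower x \<partial>D c)
      = 1 / real (card C) ^ N * (ln (real N + 1) + A * (\<Sum>c'\<in>C-{c}. binary_mean_loss c c'))"
    unfolding lower_def binary_mean_loss_def using integrable_binary_loss_integrand[OF assms]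
    by (simp add: Bochner_Integration.integral_sum Dc.prob_space)
  ultimately show ?thesis
    unfolding A_def by simp
qed

lemma Lun_ge:
  "1 / real (card C) ^ N * ln (real N + 1)
     + (1 - 1 / real (card C) ^ N) / (real (card C) * (real (card C) - 1)) * total_binary_loss
   \<le> Lun C D N f"
proof -
  define n where "n = real (card C)"
  have "1 / n * (\<Sum>c\<in>C. 1 / n ^ N * (ln (real N + 1) + (n ^ N - 1) / (n - 1) * (\<Sum>c'\<in>C-{c}. binary_mean_loss c c')))
      \<le> Lun C D N f"
    unfolding Lun_eq n_def using integral_integral_pair_loss_ge by (intro mult_left_mono sum_mono) auto
  moreover have "1 / n * (\<Sum>c\<in>C. 1 / n ^ N * (ln (real N + 1) + (n ^ N - 1) / (n - 1) * (\<Sum>c'\<in>C-{c}. binary_mean_loss c c')))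
      = 1 / n ^ N * ln (real N + 1) + (1 - 1 / n ^ N) / (n * (n - 1)) * total_binary_loss"
  proof -
    have "2 \<le> n"
      unfolding n_def using two_le_card_C by simp
    moreover have "(\<Sum>c\<in>C. ln (real N + 1) + (n ^ N - 1) / (n - 1) * (\<Sum>c'\<in>C-{c}. binary_mean_loss c c'))
        = n * ln (real N + 1) + (n ^ N - 1) / (n - 1) * total_binary_loss"
      unfolding total_binary_loss_def n_def by (simp add: sum.distrib sum_distrib_left)
    ultimately show ?thesis
      by (simp only: sum_distrib_left[symmetric]) (simp add: field_simps)
  qed
  ultimately show ?thesis
    unfolding n_def by simp
qed

end

theorem proposition3p3:
  fixes C :: "'c set" and D :: "'c \<Rightarrow> 'x measure" and X :: "'x measure"
    and f :: "'x \<Rightarrow> real^'d" and N k :: nat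
  assumes "finite C"
    and "1 \<le> N"
    and "2 \<le> k + 1" and "k + 1 \<le> card C"
    and "\<And>c. c \<in> C \<Longrightarrow> prob_space (D c)"
    and "\<And>c. c \<in> C \<Longrightarrow> sets (D c) = sets X"
    and "f \<in> borel_measurable X"
    and "\<And>c. c \<in> C \<Longrightarrow> integrable (D c) f"
  shows "Lsup_k C D k f \<le> Lsup_mu_k C D k f \<and>
         Lsup_mu_k C D k f \<le> real k / (1 - tau_plus C N) *
           (Lun C D N f - tau_plus C N * ln (real N + 1))"
proof -
  interpret class_model C D X f
    by (rule class_model.intro; (rule assms)?) (use assms(3,4) in linarith)
  interpret contrastive_model C D X f N ..
  define n where "n = real (card C)"
  define \<tau> where "\<tau> = tau_plus C N"
  have \<tau>: "\<tau> = 1 / n ^ N"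
    unfolding \<tau>_def n_def using finite_C two_le_card_C by (intro tau_plus_eq) auto
  have "1 < n ^ N"
    unfolding n_def using two_le_card_C assms(2) by (intro one_less_power) auto
  then have "\<tau> < 1"
    unfolding \<tau> by simp
  have "Lsup_mu_k C D k f \<le> real k / (n * (n - 1)) * total_binary_loss"
    unfolding n_def using assms(3,4) by (intro Lsup_mu_k_le) auto
  also have "\<dots> = real k / (1 - \<tau>) * ((1 - \<tau>) / (n * (n - 1)) * total_binary_loss)"
    using \<open>\<tau> < 1\<close> by simp
  also have "\<dots> \<le> real k / (1 - \<tau>) * (Lun C D N f - \<tau> * ln (real N + 1))"
    using Lun_ge \<open>\<tau> < 1\<close> unfolding \<tau> n_def by (intro mult_left_mono) auto
  finally show ?thesis
    using Lsup_k_le_Lsup_mu_k[OF assms(1)] unfolding \<tau>_def by simp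
qed

end
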